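(* For each real number $\epsilon>0$ there is a positive integer $n$ and a subset $S\subseteq\mathbb{Z}/n\mathbb{Z}$ with $|S|\ge(1-\epsilon)n$ such that the congruence $abc\equiv d^2\pmod n$ has no solution with $a,b,c,d\in S$ (not necessarily distinct). *)

theory Defs
  imports Complex_Main "HOL-Number_Theory.Cong"
begin

end

theory Submission
  imports Defs "HOL-Computational_Algebra.Squarefree"
begin

(*
  Choose a finite set Pr of primes, all larger than P, with  mu = sum_{p in Pr} 1/p  large
  (possible because the sum of prime reciprocals diverges), and let n = (prod Pr)^3.
  Write omega x for the number of p in Pr dividing x, and call a residue x < n typical if
  no p^2 (p in Pr) divides x and |omega x - mu| <= mu/6.

  * Arithmetic: if p^3 divides n and no p^2 divides a, b, c, d, then abc = d^2 (mod n)
    forces [p|a] + [p|b] + [p|c] = 2 [p|d]; summing over Pr gives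
    omega a + omega b + omega c = 2 omega d, impossible for typical residues.
  * Counting: at most n/P residues are divisible by some p^2, and by a second-moment
    (Turan-Kubilius) bound at most 36 n / mu residues have |omega x - mu| > mu/6.
*)

section \<open>Divergence of the sum of prime reciprocals\<close>

definition primes_between :: "nat \<Rightarrow> nat \<Rightarrow> nat set" where
  "primes_between P X = {p. prime p \<and> P < p \<and> p \<le> X}"

lemma finite_primes_between [simp]: "finite (primes_between P X)"
  unfolding primes_between_def by (rule finite_subset[of _ "{..X}"]) auto

lemma card_multiples_atLeastAtMost:
  fixes p N :: nat
  assumes "p > 0"
  shows "card {m\<in>{1..N}. p dvd m} \<le> N div p"
proof -
  have "{m\<in>{1..N}. p dvd m} \<subseteq> (\<lambda>k. p * k) ` {1..N div p}"
  proof
    fix m assume "m \<in> {m\<in>{1..N}. p dvd m}"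
    then obtain k where k: "m = p * k" "1 \<le> m" "m \<le> N" by auto
    then have "1 \<le> k" by (cases k) auto
    moreover have "k \<le> N div p"
      using k assms by (metis div_le_mono nonzero_mult_div_cancel_left not_gr0)
    ultimately show "m \<in> (\<lambda>k. p * k) ` {1..N div p}" using k by auto
  qed
  then have "card {m\<in>{1..N}. p dvd m} \<le> card ((\<lambda>k. p * k) ` {1..N div p})"
    by (intro card_mono) auto
  also have "\<dots> \<le> N div p" using card_image_le[of "{1..N div p}"] by simp
  finally show ?thesis .
qed

text \<open>Numbers up to \<open>s\<^sup>2\<close> whose prime factors are all at most \<open>P\<close> are few: each is
  determined by its squarefree part (a subset of \<open>{..P}\<close>) and its square part (at most \<open>s\<close>).\<close>

lemma card_smooth_numbers_le:
  fixes P N s :: nat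
  assumes "N \<le> s\<^sup>2"
  shows "card {m\<in>{1..N}. \<forall>q. prime q \<and> q dvd m \<longrightarrow> q \<le> P} \<le> 2 ^ (P + 1) * s"
proof -
  let ?B = "{m\<in>{1..N}. \<forall>q. prime q \<and> q dvd m \<longrightarrow> q \<le> P}"
  let ?g = "\<lambda>m::nat. (prime_factors (squarefree_part m), square_part m)"
  have "inj_on ?g ?B"
  proof
    fix x y assume eq: "?g x = ?g y"
    have "squarefree_part x = squarefree_part y"
    proof (rule multiplicity_eq_nat)
      show "squarefree_part x > 0" "squarefree_part y > 0"
        by (metis squarefree_part_nonzero gr0I)+
      fix q :: nat assume q: "prime q"
      have "multiplicity q (squarefree_part x) \<le> 1" "multiplicity q (squarefree_part y) \<le> 1"
        using q by auto
      moreover have "q \<in> prime_factors (squarefree_part x) \<longleftrightarrow> q \<in> prime_factors (squarefree_part y)"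
        using eq by simp
      then have "multiplicity q (squarefree_part x) = 0 \<longleftrightarrow> multiplicity q (squarefree_part y) = 0"
        using q by (auto simp: prime_factors_multiplicity)
      ultimately show "multiplicity q (squarefree_part x) = multiplicity q (squarefree_part y)"
        by linarith
    qed
    then show "x = y" using eq squarefree_decompose[of x] squarefree_decompose[of y] by auto
  qed
  moreover have "?g m \<in> Pow {..P} \<times> {1..s}" if m: "m \<in> ?B" for m
  proof -
    have "m \<noteq> 0" using m by auto
    have "squarefree_part m dvd m" by (metis dvd_triv_left squarefree_decompose)
    then have "prime_factors (squarefree_part m) \<subseteq> {..P}"
    proof (intro subsetI)
      fix q assume "q \<in> prime_factors (squarefree_part m)"
      then show "q \<in> {..P}"
        using m \<open>squarefree_part m dvd m\<close> by (auto intro: dvd_trans)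
    qed
    moreover have "1 \<le> square_part m"
      using \<open>m \<noteq> 0\<close> square_part_0_iff[of m] by (metis less_one not_le)
    moreover have "square_part m \<le> s"
    proof -
      have "(square_part m)\<^sup>2 \<le> m"
        using \<open>m \<noteq> 0\<close> square_part_square_dvd[of m] by (simp add: dvd_imp_le)
      also have "m \<le> s\<^sup>2" using m assms by auto
      finally show ?thesis by (rule power2_le_imp_le) simp
    qed
    ultimately show ?thesis by auto
  qed
  ultimately have "card ?B \<le> card (Pow {..P} \<times> {1..s})"
    by (intro card_inj_on_le) auto
  then show ?thesis by (simp add: card_cartesian_product card_Pow)
qed

text \<open>Erdos: beyond any bound \<open>P\<close>, the reciprocals of the primes contribute at least \<open>1/2\<close>.
  Otherwise, with \<open>N = (4^(P+1))\<^sup>2\<close>, fewer than \<open>N/2\<close> numbers in \<open>{1..N}\<close> have a prime factor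
  above \<open>P\<close>, and at most \<open>N/2\<close> have none.\<close>

lemma prime_reciprocals_block:
  fixes P :: nat
  shows "\<exists>X. (\<Sum>p\<in>primes_between P X. 1 / real p) \<ge> 1/2"
proof (rule ccontr)
  define N :: nat where "N = (4 ^ (P + 1))\<^sup>2"
  define Q where "Q = primes_between P N"
  assume "\<not> ?thesis"
  then have small: "(\<Sum>p\<in>Q. 1 / real p) < 1/2" unfolding Q_def by (meson not_le)
  let ?A = "\<Union>p\<in>Q. {m\<in>{1..N}. p dvd m}"
  let ?B = "{m\<in>{1..N}. \<forall>q. prime q \<and> q dvd m \<longrightarrow> q \<le> P}"
  have "{1..N} \<subseteq> ?A \<union> ?B"
  proof
    fix m assume m: "m \<in> {1..N}"
    show "m \<in> ?A \<union> ?B"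
    proof (cases "\<forall>q. prime q \<and> q dvd m \<longrightarrow> q \<le> P")
      case False
      then obtain q where q: "prime q" "q dvd m" "P < q" by auto
      then have "q \<le> N" using m by (auto dest: dvd_imp_le)
      then show ?thesis using q m unfolding Q_def primes_between_def by auto
    qed (use m in auto)
  qed
  then have "real N \<le> real (card ?A) + real (card ?B)"
    using card_mono[of "?A \<union> ?B" "{1..N}"] card_Un_le[of ?A ?B] unfolding Q_def by force
  moreover have "real (card ?A) < real N / 2"
  proof -
    have "real (card ?A) \<le> (\<Sum>p\<in>Q. real (card {m\<in>{1..N}. p dvd m}))"
      using card_UN_le[of Q] unfolding Q_def by (simp flip: of_nat_sum)
    also have "\<dots> \<le> (\<Sum>p\<in>Q. real N / real p)"
    proof (rule sum_mono)
      fix p assume "p \<in> Q"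
      then have "p > 0" unfolding Q_def primes_between_def using prime_gt_0_nat by auto
      then have "real (card {m\<in>{1..N}. p dvd m}) \<le> real (N div p)"
        using card_multiples_atLeastAtMost by simp
      also have "\<dots> \<le> real N / real p" by (rule of_nat_div_le_of_nat)
      finally show "real (card {m\<in>{1..N}. p dvd m}) \<le> real N / real p" .
    qed
    also have "\<dots> = real N * (\<Sum>p\<in>Q. 1 / real p)" by (simp add: sum_distrib_left)
    also have "\<dots> < real N / 2" using small by (simp add: N_def)
    finally show ?thesis .
  qed
  moreover have "real (card ?B) \<le> real N / 2"
  proof -
    have "card ?B \<le> 2 ^ (P + 1) * 4 ^ (P + 1)" by (rule card_smooth_numbers_le) (simp add: N_def)
    moreover have "2 * (2 ^ (P + 1) * 4 ^ (P + 1)) \<le> N"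
    proof -
      have "2 * (2 ^ (P + 1) * 4 ^ (P + 1)) \<le> 2 ^ (P + 1) * (2 ^ (P + 1) * (4::nat) ^ (P + 1))"
        using self_le_power[of 2 "P + 1"] by simp
      also have "\<dots> = N" unfolding N_def
        by (simp add: power2_eq_square power_mult_distrib[symmetric] mult.assoc[symmetric])
      finally show ?thesis .
    qed
    ultimately show ?thesis by simp
  qed
  ultimately show False by linarith
qed

lemma prime_reciprocals_unbounded:
  fixes K P :: nat
  shows "\<exists>X\<ge>P. (\<Sum>p\<in>primes_between P X. 1 / real p) \<ge> real K / 2"
proof (induction K arbitrary: P)
  case 0
  show ?case by (rule exI[of _ P]) (auto intro: sum_nonneg)
next
  case (Suc K)
  obtain X where X: "X \<ge> P" "(\<Sum>p\<in>primes_between P X. 1 / real p) \<ge> real K / 2"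
    using Suc.IH by blast
  obtain X' where X': "(\<Sum>p\<in>primes_between X X'. 1 / real p) \<ge> 1/2"
    using prime_reciprocals_block by blast
  then have "primes_between X X' \<noteq> {}" by auto
  then have "X < X'" unfolding primes_between_def by auto
  then have "primes_between P X' = primes_between P X \<union> primes_between X X'"
    using X(1) unfolding primes_between_def by auto
  then have "(\<Sum>p\<in>primes_between P X'. 1 / real p)
      = (\<Sum>p\<in>primes_between P X. 1 / real p) + (\<Sum>p\<in>primes_between X X'. 1 / real p)"
    by (simp only:) (rule sum.union_disjoint, auto simp: primes_between_def)
  then show ?case using X X' \<open>X < X'\<close> by (intro exI[of _ X']) auto
qed

section \<open>The arithmetic obstruction\<close>

lemma multiplicity_cong_prime_power:
  fixes p x y :: nat
  assumes p: "prime p" and cong: "[x = y] (mod p ^ k)" and "x \<noteq> 0" "y \<noteq> 0"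
  shows "min (multiplicity p x) k = min (multiplicity p y) k"
proof -
  have le: "min (multiplicity p u) k \<le> multiplicity p v"
    if "[u = v] (mod p ^ k)" "v \<noteq> 0" for u v :: nat
  proof -
    let ?j = "min (multiplicity p u) k"
    have "[u = v] (mod p ^ ?j)"
      using that(1) by (rule cong_dvd_modulus_nat) (simp add: le_imp_power_dvd)
    moreover have "p ^ ?j dvd u"
      using multiplicity_dvd[of p u] le_imp_power_dvd[of ?j "multiplicity p u" p]
      by (meson dvd_trans min.cobounded1)
    ultimately have "p ^ ?j dvd v" using cong_dvd_iff by blast
    then show ?thesis
      using power_dvd_iff_le_multiplicity[of v p ?j] that(2) prime_gt_1_nat[OF p] by auto
  qed
  show ?thesis
    using le[OF cong \<open>y \<noteq> 0\<close>] le[OF cong_sym[OF cong] \<open>x \<noteq> 0\<close>] by linarith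
qed

text \<open>The local identity at one prime: if \<open>p\<^sup>3\<close> divides the modulus and none of the
  numbers is divisible by \<open>p\<^sup>2\<close>, their valuations are the indicators \<open>[p dvd _]\<close>, and
  comparing the valuations of \<open>abc\<close> (at most 3) and \<open>d\<^sup>2\<close> (0 or 2) modulo \<open>p\<^sup>3\<close> gives the claim.\<close>

lemma prime_indicator_balance:
  fixes p a b c d n :: nat
  assumes p: "prime p" and "p ^ 3 dvd n"
    and "\<not> p\<^sup>2 dvd a" "\<not> p\<^sup>2 dvd b" "\<not> p\<^sup>2 dvd c" "\<not> p\<^sup>2 dvd d"
    and cong: "[a * b * c = d\<^sup>2] (mod n)"
  shows "of_bool (p dvd a) + of_bool (p dvd b) + of_bool (p dvd c) = 2 * (of_bool (p dvd d) :: nat)"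
proof -
  have indicator: "multiplicity p x = of_bool (p dvd x)" if "\<not> p\<^sup>2 dvd x" for x :: nat
  proof -
    have "x \<noteq> 0" using that by (metis dvd_0_right)
    then have "multiplicity p x \<le> 1"
      using that prime_gt_1_nat[OF p] power_dvd_iff_le_multiplicity[of x p 2] by auto
    then show ?thesis
      using multiplicity_eq_zero_iff[of x p] \<open>x \<noteq> 0\<close> prime_gt_1_nat[OF p]
      by (cases "multiplicity p x") auto
  qed
  have nonzero: "a \<noteq> 0" "b \<noteq> 0" "c \<noteq> 0" "d \<noteq> 0" using assms(3-6) by (metis dvd_0_right)+
  have "[a * b * c = d\<^sup>2] (mod p ^ 3)" using cong assms(2) by (rule cong_dvd_modulus_nat)
  then have "min (multiplicity p (a * b * c)) 3 = min (multiplicity p (d\<^sup>2)) 3"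
    using p nonzero by (intro multiplicity_cong_prime_power) auto
  moreover have "multiplicity p (a * b * c) = multiplicity p a + multiplicity p b + multiplicity p c"
    using p nonzero by (simp add: prime_elem_multiplicity_mult_distrib)
  moreover have "multiplicity p (d\<^sup>2) = 2 * multiplicity p d"
    using p nonzero by (simp add: prime_elem_multiplicity_power_distrib)
  ultimately show ?thesis using assms(3-6) by (simp add: indicator)
qed

lemma card_filter_eq_sum_of_bool:
  assumes "finite A"
  shows "of_nat (card {x\<in>A. Q x}) = (\<Sum>x\<in>A. of_bool (Q x) :: 'a::semiring_1)"
proof -
  have "{x\<in>A. Q x} = A \<inter> {x. Q x}" by blast
  then show ?thesis using assms by simp
qed

definition prime_divisor_count :: "nat set \<Rightarrow> nat \<Rightarrow> nat" where
  "prime_divisor_count Pr x = card {p\<in>Pr. p dvd x}"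

lemma prime_divisor_count_sum:
  assumes "finite Pr"
  shows "of_nat (prime_divisor_count Pr x) = (\<Sum>p\<in>Pr. of_bool (p dvd x) :: 'a::semiring_1)"
  unfolding prime_divisor_count_def by (rule card_filter_eq_sum_of_bool[OF assms])

lemma prime_divisor_count_balance:
  assumes "finite Pr" and Pr: "\<And>p. p \<in> Pr \<Longrightarrow> prime p \<and> p ^ 3 dvd n"
    and no_square: "\<And>p x. p \<in> Pr \<Longrightarrow> x \<in> {a, b, c, d} \<Longrightarrow> \<not> p\<^sup>2 dvd x"
    and cong: "[a * b * c = d\<^sup>2] (mod n)"
  shows "prime_divisor_count Pr a + prime_divisor_count Pr b + prime_divisor_count Pr c
           = 2 * prime_divisor_count Pr d"
proof -
  note count = prime_divisor_count_sum[OF assms(1), where 'a=nat, unfolded of_nat_id]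
  have "prime_divisor_count Pr a + prime_divisor_count Pr b + prime_divisor_count Pr c
      = (\<Sum>p\<in>Pr. of_bool (p dvd a) + of_bool (p dvd b) + of_bool (p dvd c))"
    unfolding count by (simp only: sum.distrib)
  also have "\<dots> = (\<Sum>p\<in>Pr. 2 * of_bool (p dvd d))"
    using Pr no_square cong by (intro sum.cong refl prime_indicator_balance) auto
  also have "\<dots> = 2 * prime_divisor_count Pr d"
    unfolding count by (simp only: sum_distrib_left)
  finally show ?thesis .
qed

definition typical_residues :: "nat set \<Rightarrow> nat \<Rightarrow> real \<Rightarrow> nat set" where
  "typical_residues Pr n \<mu> =
     {x\<in>{0..<n}. (\<forall>p\<in>Pr. \<not> p\<^sup>2 dvd x) \<and> \<bar>real (prime_divisor_count Pr x) - \<mu>\<bar> \<le> \<mu> / 6}"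

text \<open>For typical residues the left side of the balance is at least \<open>5\<mu>/2\<close> while the right
  side is at most \<open>7\<mu>/3\<close>, so \<open>abc = d\<^sup>2\<close> has no solution among them.\<close>

lemma typical_residues_no_solution:
  assumes "finite Pr" and "\<And>p. p \<in> Pr \<Longrightarrow> prime p \<and> p ^ 3 dvd n" and "\<mu> > 0"
    and "a \<in> typical_residues Pr n \<mu>" "b \<in> typical_residues Pr n \<mu>"
        "c \<in> typical_residues Pr n \<mu>" "d \<in> typical_residues Pr n \<mu>"
  shows "\<not> [a * b * c = d\<^sup>2] (mod n)"
proof
  let ?\<omega> = "\<lambda>x. real (prime_divisor_count Pr x)"
  assume "[a * b * c = d\<^sup>2] (mod n)"
  then have "prime_divisor_count Pr a + prime_divisor_count Pr b + prime_divisor_count Pr c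
               = 2 * prime_divisor_count Pr d"
    using assms by (intro prime_divisor_count_balance) (auto simp: typical_residues_def)
  then have "?\<omega> a + ?\<omega> b + ?\<omega> c = 2 * ?\<omega> d" by (metis of_nat_add of_nat_mult of_nat_numeral)
  moreover have near: "5 * \<mu> / 6 \<le> ?\<omega> x \<and> ?\<omega> x \<le> 7 * \<mu> / 6"
    if "x \<in> typical_residues Pr n \<mu>" for x
  proof -
    have "\<bar>?\<omega> x - \<mu>\<bar> \<le> \<mu> / 6" using that by (simp add: typical_residues_def)
    then show ?thesis by (simp only: abs_le_iff) linarith
  qed
  ultimately show False
    using near[OF assms(4)] near[OF assms(5)] near[OF assms(6)] near[OF assms(7)] \<open>\<mu> > 0\<close>
    by linarith
qed

section \<open>Counting residues\<close>

lemma card_multiples_below: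
  fixes q n :: nat
  assumes "q > 0" "q dvd n"
  shows "real (card {x\<in>{0..<n}. q dvd x}) = real n / real q"
proof -
  have "{x\<in>{0..<n}. q dvd x} = (\<lambda>k. q * k) ` {0..<n div q}"
    using assms by (auto simp: dvd_def)
  moreover have "inj_on (\<lambda>k. q * k) {0..<n div q}" using assms by (auto simp: inj_on_def)
  ultimately have "card {x\<in>{0..<n}. q dvd x} = n div q" by (simp add: card_image)
  then show ?thesis using real_of_nat_div[OF assms(2)] by simp
qed

text \<open>Telescoping: \<open>\<Sum> 1/m\<^sup>2\<close> over any finite set of integers \<open>> P\<close> is at most \<open>1/P\<close>.\<close>

lemma sum_inverse_squares_le:
  fixes P :: nat
  assumes "P \<ge> 1" "finite A" "A \<subseteq> {P<..}"
  shows "(\<Sum>m\<in>A. 1 / (real m)\<^sup>2) \<le> 1 / real P"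
proof -
  have telescope: "(\<Sum>m\<in>{P<..X}. 1 / (real m)\<^sup>2) \<le> 1 / real P - 1 / real X" if "P \<le> X" for X
    using that
  proof (induction X rule: dec_induct)
    case (step X)
    have "real X \<ge> 1" using step assms by simp
    have "(\<Sum>m\<in>{P<..Suc X}. 1 / (real m)\<^sup>2) = 1 / (real X + 1)\<^sup>2 + (\<Sum>m\<in>{P<..X}. 1 / (real m)\<^sup>2)"
    proof -
      have "{P<..Suc X} = insert (Suc X) {P<..X}" using step by auto
      then show ?thesis by simp
    qed
    also have "\<dots> \<le> 1 / (real X * (real X + 1)) + (1 / real P - 1 / real X)"
      using step.IH \<open>real X \<ge> 1\<close> by (intro add_mono divide_left_mono) (auto simp: power2_eq_square)
    also have "\<dots> = 1 / real P - 1 / real (Suc X)"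
    proof -
      have "1 / (real X * (real X + 1)) = 1 / real X - 1 / (real X + 1)"
        using \<open>real X \<ge> 1\<close> by (simp add: divide_simps)
      then show ?thesis by simp
    qed
    finally show ?case .
  qed simp
  define X where "X = Max (insert P A)"
  have "P \<le> X" "A \<subseteq> {P<..X}" using assms unfolding X_def by auto
  then have "(\<Sum>m\<in>A. 1 / (real m)\<^sup>2) \<le> (\<Sum>m\<in>{P<..X}. 1 / (real m)\<^sup>2)"
    by (intro sum_mono2) auto
  also have "\<dots> \<le> 1 / real P - 1 / real X" by (rule telescope[OF \<open>P \<le> X\<close>])
  also have "\<dots> \<le> 1 / real P" by simp
  finally show ?thesis .
qed

lemma card_square_divisible_le:
  fixes P n :: nat
  assumes "P \<ge> 1" "finite Pr" "Pr \<subseteq> {P<..}" and Pr: "\<And>p. p \<in> Pr \<Longrightarrow> p\<^sup>2 dvd n"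
  shows "real (card (\<Union>p\<in>Pr. {x\<in>{0..<n}. p\<^sup>2 dvd x})) \<le> real n / real P"
proof -
  have pos: "p > 0" if "p \<in> Pr" for p using assms(3) that by auto
  have "real (card (\<Union>p\<in>Pr. {x\<in>{0..<n}. p\<^sup>2 dvd x})) \<le> (\<Sum>p\<in>Pr. real (card {x\<in>{0..<n}. p\<^sup>2 dvd x}))"
    using card_UN_le[OF assms(2)] by (simp flip: of_nat_sum)
  also have "\<dots> = (\<Sum>p\<in>Pr. real n / real (p\<^sup>2))"
    using pos Pr by (intro sum.cong refl card_multiples_below) auto
  also have "\<dots> = real n * (\<Sum>p\<in>Pr. 1 / (real p)\<^sup>2)" by (simp add: sum_distrib_left)
  also have "\<dots> \<le> real n / real P"
    using sum_inverse_squares_le[OF assms(1-3)] by (simp add: mult_left_mono divide_inverse)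
  finally show ?thesis .
qed

text \<open>The mean of \<open>prime_divisor_count Pr\<close> over the residues modulo a multiple of \<open>\<Prod>Pr\<close>
  is \<open>\<mu> = \<Sum>p\<in>Pr. 1/p\<close>: each \<open>p\<close> divides exactly \<open>n/p\<close> of them.\<close>

lemma prime_divisor_count_first_moment:
  assumes "finite Pr" and Pr: "\<And>p. p \<in> Pr \<Longrightarrow> prime p" and "\<Prod>Pr dvd n"
  shows "(\<Sum>x\<in>{0..<n}. real (prime_divisor_count Pr x)) = real n * (\<Sum>p\<in>Pr. 1 / real p)"
proof -
  have "(\<Sum>x\<in>{0..<n}. real (prime_divisor_count Pr x)) = (\<Sum>x\<in>{0..<n}. \<Sum>p\<in>Pr. of_bool (p dvd x))"
    by (simp only: prime_divisor_count_sum[OF assms(1)])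
  also have "\<dots> = (\<Sum>p\<in>Pr. \<Sum>x\<in>{0..<n}. of_bool (p dvd x))" by (rule sum.swap)
  also have "\<dots> = (\<Sum>p\<in>Pr. real (card {x\<in>{0..<n}. p dvd x}))"
    by (simp only: card_filter_eq_sum_of_bool[symmetric] finite_atLeastLessThan)
  also have "\<dots> = (\<Sum>p\<in>Pr. real n * (1 / real p))"
  proof (rule sum.cong[OF refl])
    fix p assume "p \<in> Pr"
    then have "p dvd n" using assms(1,3) by (meson dvd_prodI dvd_trans)
    then show "real (card {x\<in>{0..<n}. p dvd x}) = real n * (1 / real p)"
      using card_multiples_below[of p n] Pr[OF \<open>p \<in> Pr\<close>] prime_gt_0_nat by simp
  qed
  finally show ?thesis by (simp add: sum_distrib_left)
qed

lemma card_multiples_of_two_primes: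
  fixes p q n :: nat
  assumes "prime p" "prime q" "p \<noteq> q" "p * q dvd n"
  shows "real (card {x\<in>{0..<n}. p dvd x \<and> q dvd x}) = real n / (real p * real q)"
proof -
  have "{x\<in>{0..<n}. p dvd x \<and> q dvd x} = {x\<in>{0..<n}. p * q dvd x}"
    using divides_mult primes_coprime[OF assms(1-3)] by (auto intro: dvd_mult_left dvd_mult_right)
  then show ?thesis
    using card_multiples_below[of "p * q" n] assms(1,2,4) prime_gt_0_nat by simp
qed

text \<open>The second moment is at most \<open>\<mu>\<^sup>2 + \<mu>\<close> per residue: pairs of distinct primes contribute
  \<open>1/(pq)\<close>, the diagonal contributes \<open>1/p\<close>.\<close>

lemma prime_divisor_count_second_moment:
  assumes "finite Pr" and Pr: "\<And>p. p \<in> Pr \<Longrightarrow> prime p" and "\<Prod>Pr dvd n"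
  defines "\<mu> \<equiv> \<Sum>p\<in>Pr. 1 / real p"
  shows "(\<Sum>x\<in>{0..<n}. (real (prime_divisor_count Pr x))\<^sup>2) \<le> real n * \<mu>\<^sup>2 + real n * \<mu>"
proof -
  have joint: "real (card {x\<in>{0..<n}. p dvd x \<and> q dvd x})
      \<le> real n * (1 / real p) * (1 / real q) + (if p = q then real n * (1 / real p) else 0)"
    if "p \<in> Pr" "q \<in> Pr" for p q
  proof (cases "p = q")
    case True
    have "p dvd n" using \<open>p \<in> Pr\<close> assms(1,3) by (meson dvd_prodI dvd_trans)
    then show ?thesis
      using True card_multiples_below[of p n] Pr[OF \<open>p \<in> Pr\<close>] prime_gt_0_nat by simp
  next
    case False
    have "coprime p q" using primes_coprime[OF Pr Pr False] that by simp
    then have "p * q dvd \<Prod>Pr"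
      using that assms(1) by (intro divides_mult dvd_prodI)
    then have "p * q dvd n" using assms(3) dvd_trans by blast
    then show ?thesis
      using card_multiples_of_two_primes[OF Pr Pr False] that False by simp
  qed
  have square: "(real (prime_divisor_count Pr x))\<^sup>2 = (\<Sum>p\<in>Pr. \<Sum>q\<in>Pr. of_bool (p dvd x \<and> q dvd x))"
    for x
    unfolding prime_divisor_count_sum[OF assms(1)] power2_eq_square sum_product by (simp only: of_bool_conj)
  have "(\<Sum>x\<in>{0..<n}. (real (prime_divisor_count Pr x))\<^sup>2)
      = (\<Sum>x\<in>{0..<n}. \<Sum>p\<in>Pr. \<Sum>q\<in>Pr. of_bool (p dvd x \<and> q dvd x))"
    by (simp only: square)
  also have "\<dots> = (\<Sum>p\<in>Pr. \<Sum>q\<in>Pr. \<Sum>x\<in>{0..<n}. of_bool (p dvd x \<and> q dvd x))"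
    by (subst sum.swap) (rule sum.cong[OF refl], rule sum.swap)
  also have "\<dots> = (\<Sum>p\<in>Pr. \<Sum>q\<in>Pr. real (card {x\<in>{0..<n}. p dvd x \<and> q dvd x}))"
    by (simp only: card_filter_eq_sum_of_bool finite_atLeastLessThan)
  also have "\<dots> \<le> (\<Sum>p\<in>Pr. \<Sum>q\<in>Pr. real n * (1 / real p) * (1 / real q)
                     + (if p = q then real n * (1 / real p) else 0))"
    by (intro sum_mono joint)
  also have "\<dots> = (\<Sum>p\<in>Pr. \<Sum>q\<in>Pr. real n * (1 / real p) * (1 / real q))
                 + (\<Sum>p\<in>Pr. real n * (1 / real p))"
    using assms(1) by (simp add: sum.distrib)
  also have "\<dots> = real n * \<mu>\<^sup>2 + real n * \<mu>"
  proof -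
    have "\<mu>\<^sup>2 = (\<Sum>p\<in>Pr. \<Sum>q\<in>Pr. 1 / real p * (1 / real q))"
      unfolding \<mu>_def by (simp only: power2_eq_square sum_product)
    then show ?thesis by (simp add: \<mu>_def sum_distrib_left mult.assoc)
  qed
  finally show ?thesis .
qed

text \<open>Turan-Kubilius: the variance of \<open>prime_divisor_count Pr\<close> is at most its mean \<open>\<mu>\<close>; hence
  (Chebyshev) at most \<open>n \<mu> / t\<^sup>2\<close> residues deviate from \<open>\<mu>\<close> by more than \<open>t\<close>.\<close>

lemma card_prime_divisor_count_deviation_le:
  assumes "finite Pr" and "\<And>p. p \<in> Pr \<Longrightarrow> prime p" and "\<Prod>Pr dvd n" and "t > 0"
  defines "\<mu> \<equiv> \<Sum>p\<in>Pr. 1 / real p"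
  shows "real (card {x\<in>{0..<n}. \<bar>real (prime_divisor_count Pr x) - \<mu>\<bar> > t}) \<le> real n * \<mu> / t\<^sup>2"
proof -
  let ?\<omega> = "\<lambda>x. real (prime_divisor_count Pr x)"
  let ?D = "{x\<in>{0..<n}. \<bar>?\<omega> x - \<mu>\<bar> > t}"
  have "(\<Sum>x\<in>{0..<n}. (?\<omega> x - \<mu>)\<^sup>2)
      = (\<Sum>x\<in>{0..<n}. (?\<omega> x)\<^sup>2) - 2 * \<mu> * (\<Sum>x\<in>{0..<n}. ?\<omega> x) + real n * \<mu>\<^sup>2"
    by (simp add: power2_diff sum.distrib sum_subtractf sum_distrib_left mult_ac)
  then have variance: "(\<Sum>x\<in>{0..<n}. (?\<omega> x - \<mu>)\<^sup>2) \<le> real n * \<mu>"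
    using prime_divisor_count_first_moment[OF assms(1-3)]
      prime_divisor_count_second_moment[OF assms(1-3)]
    by (simp add: \<mu>_def power2_eq_square)
  have "real (card ?D) * t\<^sup>2 = (\<Sum>x\<in>?D. t\<^sup>2)" by simp
  also have "\<dots> \<le> (\<Sum>x\<in>?D. (?\<omega> x - \<mu>)\<^sup>2)"
    using \<open>t > 0\<close> by (intro sum_mono) (simp add: abs_le_square_iff[symmetric] less_imp_le)
  also have "\<dots> \<le> (\<Sum>x\<in>{0..<n}. (?\<omega> x - \<mu>)\<^sup>2)" by (intro sum_mono2) auto
  finally show ?thesis using variance \<open>t > 0\<close> by (simp add: field_simps)
qed

lemma card_typical_residues_ge:
  fixes P n :: nat
  assumes "P \<ge> 1" "finite Pr" "Pr \<subseteq> {P<..}" and Pr: "\<And>p. p \<in> Pr \<Longrightarrow> prime p"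
    and "(\<Prod>Pr) ^ 3 dvd n"
  defines "\<mu> \<equiv> \<Sum>p\<in>Pr. 1 / real p"
  assumes "\<mu> > 0"
  shows "real (card (typical_residues Pr n \<mu>)) \<ge> (1 - 1 / real P - 36 / \<mu>) * real n"
proof -
  let ?T = "typical_residues Pr n \<mu>"
  let ?B1 = "\<Union>p\<in>Pr. {x\<in>{0..<n}. p\<^sup>2 dvd x}"
  let ?B2 = "{x\<in>{0..<n}. \<bar>real (prime_divisor_count Pr x) - \<mu>\<bar> > \<mu> / 6}"
  have "p\<^sup>2 dvd n" if "p \<in> Pr" for p
  proof -
    have "p\<^sup>2 dvd (\<Prod>Pr)\<^sup>2" using that assms(2) by (intro dvd_power_same dvd_prodI)
    also have "(\<Prod>Pr)\<^sup>2 dvd (\<Prod>Pr) ^ 3" by (rule le_imp_power_dvd) simp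
    finally show ?thesis using assms(5) by (rule dvd_trans)
  qed
  then have B1: "real (card ?B1) \<le> real n / real P"
    by (rule card_square_divisible_le[OF assms(1-3)])
  have "\<Prod>Pr dvd n" using assms(5) by (rule dvd_trans[rotated]) (simp add: dvd_power)
  then have "real (card ?B2) \<le> real n * \<mu> / (\<mu> / 6)\<^sup>2"
    using card_prime_divisor_count_deviation_le[OF assms(2) Pr, of n "\<mu> / 6", folded \<mu>_def]
      \<open>\<mu> > 0\<close> by simp
  also have "\<dots> = 36 * real n / \<mu>" using \<open>\<mu> > 0\<close> by (simp add: field_simps power2_eq_square)
  finally have B2: "real (card ?B2) \<le> 36 * real n / \<mu>" .
  have "{0..<n} \<subseteq> ?T \<union> ?B1 \<union> ?B2" by (auto simp: typical_residues_def)
  moreover have "finite ?T" by (simp add: typical_residues_def)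
  ultimately have "n \<le> card (?T \<union> ?B1 \<union> ?B2)"
    using card_mono[of "?T \<union> ?B1 \<union> ?B2" "{0..<n}"] assms(2) by simp
  also have "\<dots> \<le> card ?T + card ?B1 + card ?B2"
    by (meson add_le_mono card_Un_le le_refl order_trans)
  finally have "n \<le> card ?T + card ?B1 + card ?B2" .
  moreover have "(1 - 1 / real P - 36 / \<mu>) * real n = real n - real n / real P - 36 * real n / \<mu>"
    by (simp add: algebra_simps)
  ultimately show ?thesis using B1 B2 by linarith
qed

text \<open>Take the primes in \<open>(P, X]\<close> with \<open>P \<ge> 2/\<epsilon>\<close> and \<open>X\<close> so large that \<open>\<mu> \<ge> 72/\<epsilon>\<close>; then both
  exceptional proportions \<open>1/P\<close> and \<open>36/\<mu>\<close> are at most \<open>\<epsilon>/2\<close>.\<close>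

theorem corollary3p2:
  fixes \<epsilon> :: real
  assumes "\<epsilon> > 0"
  shows "\<exists>(n::nat) S. n > 0 \<and> S \<subseteq> {0..<n} \<and> real (card S) \<ge> (1 - \<epsilon>) * real n \<and>
           (\<forall>a\<in>S. \<forall>b\<in>S. \<forall>c\<in>S. \<forall>d\<in>S. \<not> [a * b * c = d\<^sup>2] (mod n))"
proof -
  define P :: nat where "P = nat \<lceil>2 / \<epsilon>\<rceil> + 1"
  obtain X where X: "(\<Sum>p\<in>primes_between P X. 1 / real p) \<ge> real (nat \<lceil>144 / \<epsilon>\<rceil>) / 2"
    using prime_reciprocals_unbounded by blast
  define Pr where "Pr = primes_between P X"
  define \<mu> where "\<mu> = (\<Sum>p\<in>Pr. 1 / real p)"
  define n where "n = (\<Prod>Pr) ^ 3"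
  define S where "S = typical_residues Pr n \<mu>"
  have Pr: "finite Pr" "Pr \<subseteq> {P<..}" "\<And>p. p \<in> Pr \<Longrightarrow> prime p"
    by (auto simp: Pr_def primes_between_def)
  have "P \<ge> 1" "real P \<ge> 2 / \<epsilon>" unfolding P_def by linarith+
  then have "1 / real P \<le> \<epsilon> / 2" using \<open>\<epsilon> > 0\<close> by (simp add: field_simps)
  have "\<mu> \<ge> 72 / \<epsilon>" using X unfolding \<mu>_def Pr_def by linarith
  moreover have "72 / \<epsilon> > 0" using \<open>\<epsilon> > 0\<close> by simp
  ultimately have "\<mu> > 0" by linarith
  have "36 / \<mu> \<le> \<epsilon> / 2" using \<open>\<mu> \<ge> 72 / \<epsilon>\<close> \<open>\<mu> > 0\<close> \<open>\<epsilon> > 0\<close> by (simp add: field_simps)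
  have "(1 - \<epsilon>) * real n \<le> (1 - 1 / real P - 36 / \<mu>) * real n"
    using \<open>1 / real P \<le> \<epsilon> / 2\<close> \<open>36 / \<mu> \<le> \<epsilon> / 2\<close> by (intro mult_right_mono) (linarith, simp)
  also have "\<dots> \<le> real (card S)"
  proof -
    have "(\<Prod>Pr) ^ 3 dvd n" by (simp add: n_def)
    then show ?thesis unfolding S_def \<mu>_def
      by (intro card_typical_residues_ge) (use Pr \<open>P \<ge> 1\<close> \<open>\<mu> > 0\<close> in \<open>auto simp: \<mu>_def\<close>)
  qed
  finally have dense: "real (card S) \<ge> (1 - \<epsilon>) * real n" .
  have solution_free: "\<forall>a\<in>S. \<forall>b\<in>S. \<forall>c\<in>S. \<forall>d\<in>S. \<not> [a * b * c = d\<^sup>2] (mod n)"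
    unfolding S_def using Pr \<open>\<mu> > 0\<close>
    by (intro ballI typical_residues_no_solution) (auto simp: n_def dvd_power_same dvd_prodI)
  have "n > 0" using Pr by (simp add: n_def prime_gt_0_nat)
  moreover have "S \<subseteq> {0..<n}" by (auto simp: S_def typical_residues_def)
  ultimately show ?thesis using dense solution_free by blast
qed

end
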